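(* Let $(u_1,v_1),(u_2,v_2)\in\mathbb{R}^2$ and let $d>\sqrt{(u_1-u_2)^2+(v_1-v_2)^2}$. Define the $2\times2$ symmetric matrix $$M(x,y)=\bigl(d^2+(u_1-u_2)(2x-u_1-u_2)+(v_1-v_2)(2y-v_1-v_2)\bigr)I_2+2d\begin{bmatrix}x-u_2 & y-v_2\\ y-v_2 & -x+u_2\end{bmatrix}.$$ Then $\det M(x,y)=\prod_{\epsilon_1,\epsilon_2\in\{\pm1\}}\bigl(d+\epsilon_1 r_1+\epsilon_2 r_2\bigr)$ where $r_i=\sqrt{(x-u_i)^2+(y-v_i)^2}$, and $$\{(x,y)\in\mathbb{R}^2: M(x,y)\succeq0\}=\{(x,y)\in\mathbb{R}^2: r_1+r_2\le d\}.$$ *)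

theory Defs
  imports "HOL-Analysis.Analysis"
begin

definition psd :: "real^'n^'n \<Rightarrow> bool" where
  "psd A \<longleftrightarrow> transpose A = A \<and> (\<forall>v. v \<bullet> (A *v v) \<ge> 0)"

definition Mmat :: "real \<Rightarrow> real \<Rightarrow> real \<Rightarrow> real \<Rightarrow> real \<Rightarrow> real \<Rightarrow> real \<Rightarrow> real^2^2" where
  "Mmat d u1 v1 u2 v2 x y =
     (d\<^sup>2 + (u1 - u2) * (2*x - u1 - u2) + (v1 - v2) * (2*y - v1 - v2)) *\<^sub>R mat 1
     + (2 * d) *\<^sub>R (vector [vector [x - u2, y - v2], vector [y - v2, - x + u2]])"

end

theory Submission
  imports Defs
begin

text \<open>With \<open>r\<^sub>i\<close> the distance from \<open>(x, y)\<close> to the focus \<open>(u\<^sub>i, v\<^sub>i)\<close>, the matrix is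
  \<open>M = c I + 2d [[a, b], [b, -a]]\<close> with \<open>c = d\<^sup>2 + r\<^sub>2\<^sup>2 - r\<^sub>1\<^sup>2\<close> and \<open>(a, b) = (x - u\<^sub>2, y - v\<^sub>2)\<close>;
  the traceless part has eigenvalues \<open>\<plusminus>2d r\<^sub>2\<close>. Hence \<open>det M = c\<^sup>2 - 4 d\<^sup>2 r\<^sub>2\<^sup>2\<close>, which factors
  into the four sign combinations, and \<open>M \<succeq> 0\<close> iff \<open>2 d r\<^sub>2 \<le> c\<close>, i.e. \<open>r\<^sub>1\<^sup>2 \<le> (d - r\<^sub>2)\<^sup>2\<close>.
  Since \<open>d\<close> exceeds the distance between the foci, the triangle inequality gives
  \<open>r\<^sub>2 < d + r\<^sub>1\<close>, which rules out \<open>r\<^sub>1 \<le> r\<^sub>2 - d\<close> and leaves \<open>r\<^sub>1 + r\<^sub>2 \<le> d\<close>.\<close>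

lemma quadratic_form_2x2:
  fixes A :: "real^2^2" and w :: "real^2"
  shows "w \<bullet> (A *v w) = A$1$1 * (w$1)\<^sup>2 + (A$1$2 + A$2$1) * w$1 * w$2 + A$2$2 * (w$2)\<^sup>2"
  by (simp add: inner_vec_def matrix_vector_mult_def sum_2 algebra_simps power2_eq_square)

lemma psd_2x2_iff:
  fixes A :: "real^2^2"
  assumes sym: "transpose A = A"
  shows "psd A \<longleftrightarrow> 0 \<le> A$1$1 \<and> 0 \<le> A$2$2 \<and> 0 \<le> det A"
proof -
  have A21: "A$2$1 = A$1$2"
    using arg_cong[where f = "\<lambda>B. B$1$2", OF sym] by (simp add: transpose_def)
  define Q where "Q p q = A$1$1 * p\<^sup>2 + 2 * A$1$2 * p * q + A$2$2 * q\<^sup>2" for p q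
  have form: "w \<bullet> (A *v w) = Q (w$1) (w$2)" for w
    unfolding quadratic_form_2x2 Q_def A21 by algebra
  have det: "det A = A$1$1 * A$2$2 - (A$1$2)\<^sup>2"
    unfolding det_2 A21 by (simp add: power2_eq_square)
  have "(\<forall>w. 0 \<le> w \<bullet> (A *v w)) \<longleftrightarrow> (\<forall>p q. 0 \<le> Q p q)"
    unfolding form by (metis vector_2)
  also have "\<dots> \<longleftrightarrow> 0 \<le> A$1$1 \<and> 0 \<le> A$2$2 \<and> 0 \<le> det A"
  proof
    assume Q: "\<forall>p q. 0 \<le> Q p q"
    have diag: "0 \<le> A$1$1" "0 \<le> A$2$2"
      using Q[rule_format, of 1 0] Q[rule_format, of 0 1] by (simp_all add: Q_def)
    moreover have "0 \<le> det A"
    proof (cases "A$1$1 = 0 \<and> A$2$2 = 0")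
      case True
      then show ?thesis
        using Q[rule_format, of 1 "- A$1$2"] by (simp add: Q_def det power2_eq_square)
    next
      case False
      have "Q (A$1$2) (- A$1$1) = A$1$1 * det A" "Q (A$2$2) (- A$1$2) = A$2$2 * det A"
        unfolding Q_def det by algebra+
      then have "0 \<le> A$1$1 * det A" "0 \<le> A$2$2 * det A"
        using Q[rule_format, of "A$1$2" "- A$1$1"] Q[rule_format, of "A$2$2" "- A$1$2"] by simp_all
      moreover have "0 < A$1$1 \<or> 0 < A$2$2"
        using False diag by linarith
      ultimately show ?thesis
        by (auto simp: zero_le_mult_iff)
    qed
    ultimately show "0 \<le> A$1$1 \<and> 0 \<le> A$2$2 \<and> 0 \<le> det A" by blast
  next
    assume "0 \<le> A$1$1 \<and> 0 \<le> A$2$2 \<and> 0 \<le> det A"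
    then have diag: "0 \<le> A$1$1" "0 \<le> A$2$2" and "0 \<le> det A" by auto
    show "\<forall>p q. 0 \<le> Q p q"
    proof (intro allI)
      fix p q
      show "0 \<le> Q p q"
      proof (cases "A$1$1 = 0")
        case True
        then have "A$1$2 = 0" using \<open>0 \<le> det A\<close> by (simp add: det)
        then show ?thesis using True diag by (simp add: Q_def)
      next
        case False
        have "A$1$1 * Q p q = (A$1$1 * p + A$1$2 * q)\<^sup>2 + det A * q\<^sup>2"
          unfolding Q_def det by algebra
        also have "0 \<le> \<dots>" using \<open>0 \<le> det A\<close> by simp
        finally show ?thesis using False diag by (simp add: zero_le_mult_iff)
      qed
    qed
  qed
  finally show ?thesis unfolding psd_def using sym by blast
qed

lemma det_scalar_plus_traceless_2x2:
  fixes c k a b :: real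
  shows "det (c *\<^sub>R mat 1 + k *\<^sub>R vector [vector [a, b], vector [b, - a]] :: real^2^2)
           = c\<^sup>2 - k\<^sup>2 * (a\<^sup>2 + b\<^sup>2)"
  by (simp add: det_2 mat_def algebra_simps power2_eq_square)

lemma psd_scalar_plus_traceless_2x2_iff:
  fixes c k a b :: real
  shows "psd (c *\<^sub>R mat 1 + k *\<^sub>R vector [vector [a, b], vector [b, - a]] :: real^2^2)
           \<longleftrightarrow> \<bar>k\<bar> * sqrt (a\<^sup>2 + b\<^sup>2) \<le> c"
    (is "psd ?A \<longleftrightarrow> ?s \<le> c")
proof -
  have entries: "?A$1$1 = c + k * a" "?A$2$2 = c - k * a"
    by (simp_all add: mat_def)
  have sym: "transpose ?A = ?A"
    by (simp add: vec_eq_iff forall_2 transpose_def mat_def)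
  have det: "det ?A = c\<^sup>2 - ?s\<^sup>2"
    by (simp add: det_scalar_plus_traceless_2x2 power_mult_distrib)
  have ka: "\<bar>k * a\<bar> \<le> ?s"
    unfolding abs_mult by (simp add: mult_left_mono)
  have "0 \<le> ?s"
    by simp
  show ?thesis
  proof
    assume "psd ?A"
    then have "\<bar>k * a\<bar> \<le> c" "?s\<^sup>2 \<le> c\<^sup>2"
      unfolding psd_2x2_iff[OF sym] entries det by auto
    then show "?s \<le> c"
      by (auto intro: power2_le_imp_le)
  next
    assume "?s \<le> c"
    then have "?s\<^sup>2 \<le> c\<^sup>2"
      using \<open>0 \<le> ?s\<close> by (intro power_mono)
    then show "psd ?A"
      unfolding psd_2x2_iff[OF sym] entries det using ka \<open>?s \<le> c\<close> by auto
  qed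
qed

lemma prod_sign_combinations:
  fixes d r s :: real
  shows "(\<Prod>e1\<in>{-1, 1::real}. \<Prod>e2\<in>{-1, 1::real}. d + e1 * r + e2 * s)
           = (d\<^sup>2 + s\<^sup>2 - r\<^sup>2)\<^sup>2 - (2 * d * s)\<^sup>2"
  by simp algebra

lemma add_le_iff_power2_le_diff:
  fixes d r s :: real
  assumes "0 \<le> r" and "s < d + r"
  shows "r + s \<le> d \<longleftrightarrow> r\<^sup>2 \<le> (d - s)\<^sup>2"
proof
  assume "r + s \<le> d"
  then show "r\<^sup>2 \<le> (d - s)\<^sup>2"
    using assms(1) by (intro power_mono) auto
next
  assume "r\<^sup>2 \<le> (d - s)\<^sup>2"
  then have "r \<le> \<bar>d - s\<bar>"
    by (metis abs_le_square_iff abs_of_nonneg assms(1))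
  then show "r + s \<le> d"
    using assms(2) by linarith
qed

lemma sqrt_sum_squares_dist_triangle:
  fixes x y u1 v1 u2 v2 :: real
  shows "sqrt ((x - u2)\<^sup>2 + (y - v2)\<^sup>2)
           \<le> sqrt ((x - u1)\<^sup>2 + (y - v1)\<^sup>2) + sqrt ((u1 - u2)\<^sup>2 + (v1 - v2)\<^sup>2)"
  using real_sqrt_sum_squares_triangle_ineq[of "x - u1" "u1 - u2" "y - v1" "v1 - v2"] by simp

lemma Mmat_eq_focal:
  fixes d u1 v1 u2 v2 x y :: real
  defines "r1 \<equiv> sqrt ((x - u1)\<^sup>2 + (y - v1)\<^sup>2)" and "r2 \<equiv> sqrt ((x - u2)\<^sup>2 + (y - v2)\<^sup>2)"
  shows "Mmat d u1 v1 u2 v2 x y =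
           (d\<^sup>2 + r2\<^sup>2 - r1\<^sup>2) *\<^sub>R mat 1
           + (2 * d) *\<^sub>R vector [vector [x - u2, y - v2], vector [y - v2, - (x - u2)]]"
proof -
  have "r1\<^sup>2 = (x - u1)\<^sup>2 + (y - v1)\<^sup>2" "r2\<^sup>2 = (x - u2)\<^sup>2 + (y - v2)\<^sup>2"
    by (simp_all add: r1_def r2_def)
  then have "d\<^sup>2 + r2\<^sup>2 - r1\<^sup>2 = d\<^sup>2 + (u1 - u2) * (2*x - u1 - u2) + (v1 - v2) * (2*y - v1 - v2)"
    by algebra
  then show ?thesis
    unfolding Mmat_def by simp
qed

lemma det_Mmat:
  fixes d u1 v1 u2 v2 x y :: real
  defines "r1 \<equiv> sqrt ((x - u1)\<^sup>2 + (y - v1)\<^sup>2)" and "r2 \<equiv> sqrt ((x - u2)\<^sup>2 + (y - v2)\<^sup>2)"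
  shows "det (Mmat d u1 v1 u2 v2 x y)
           = (\<Prod>e1\<in>{-1, 1::real}. \<Prod>e2\<in>{-1, 1::real}. d + e1 * r1 + e2 * r2)"
  unfolding Mmat_eq_focal det_scalar_plus_traceless_2x2 prod_sign_combinations r1_def r2_def
  by (simp add: power_mult_distrib)

lemma psd_Mmat_iff:
  fixes d u1 v1 u2 v2 x y :: real
  assumes "sqrt ((u1 - u2)\<^sup>2 + (v1 - v2)\<^sup>2) < d"
  defines "r1 \<equiv> sqrt ((x - u1)\<^sup>2 + (y - v1)\<^sup>2)" and "r2 \<equiv> sqrt ((x - u2)\<^sup>2 + (y - v2)\<^sup>2)"
  shows "psd (Mmat d u1 v1 u2 v2 x y) \<longleftrightarrow> r1 + r2 \<le> d"
proof -
  have "0 \<le> sqrt ((u1 - u2)\<^sup>2 + (v1 - v2)\<^sup>2)"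
    by simp
  then have "0 < d"
    using assms(1) by linarith
  have "0 \<le> r1" "r2 < d + r1"
    using sqrt_sum_squares_dist_triangle[of x u2 y v2 u1 v1] assms by auto
  have "psd (Mmat d u1 v1 u2 v2 x y) \<longleftrightarrow> 2 * d * r2 \<le> d\<^sup>2 + r2\<^sup>2 - r1\<^sup>2"
    unfolding Mmat_eq_focal psd_scalar_plus_traceless_2x2_iff r1_def r2_def using \<open>0 < d\<close> by simp
  also have "\<dots> \<longleftrightarrow> r1\<^sup>2 \<le> (d - r2)\<^sup>2"
    unfolding power2_diff by linarith
  also have "\<dots> \<longleftrightarrow> r1 + r2 \<le> d"
    using add_le_iff_power2_le_diff[OF \<open>0 \<le> r1\<close> \<open>r2 < d + r1\<close>] by simp
  finally show ?thesis .
qed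

theorem mainTheorem5:
  fixes u1 v1 u2 v2 d :: real
  assumes "d > sqrt ((u1 - u2)\<^sup>2 + (v1 - v2)\<^sup>2)"
  shows "(\<forall>x y. det (Mmat d u1 v1 u2 v2 x y) =
            (\<Prod>e1\<in>{-1, 1::real}. \<Prod>e2\<in>{-1, 1::real}.
               d + e1 * sqrt ((x - u1)\<^sup>2 + (y - v1)\<^sup>2) + e2 * sqrt ((x - u2)\<^sup>2 + (y - v2)\<^sup>2)))
    \<and> ({(x, y). psd (Mmat d u1 v1 u2 v2 x y)} =
         {(x, y). sqrt ((x - u1)\<^sup>2 + (y - v1)\<^sup>2) + sqrt ((x - u2)\<^sup>2 + (y - v2)\<^sup>2) \<le> d})"
  using det_Mmat psd_Mmat_iff[OF assms] by auto

end
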